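(* Let $\mu$ be a Lévy measure as in the context, and let $\phi,\psi\in L^\infty(\mathbb{R}^d\times\mathbb{R}^d)$ be functions of $(x,y)$ with $\psi$ compactly supported. If $\mathcal B_{x+y}[\phi,\psi]$, $\mathcal B_{x,x+y}[\phi,\psi]$ and $\mathcal B_{y,x+y}[\phi,\psi]$ are well-defined in $L^1(\mathbb{R}^d\times\mathbb{R}^d)$, then $$\int_{\mathbb{R}^d\times\mathbb{R}^d}\mathcal B_{x+y}[\phi,\psi]\,dx\,dy=\int_{\mathbb{R}^d\times\mathbb{R}^d}\big(\mathcal B_{x,x+y}[\phi,\psi]+\mathcal B_{y,x+y}[\phi,\psi]\big)\,dx\,dy.$$
   Context: $\mu$ is a symmetric nonnegative Radon measure on $\mathbb{R}^d\setminus\{0\}$ with $\int(|z|^2\wedge1)\,d\mu(z)<\infty$. For bounded measurable $\phi,\psi$ on $\mathbb{R}^d\times\mathbb{R}^d$ and $r>0$ define $\mathcal B^{\ge r}_{x+y}[\phi,\psi](x,y)=\frac12\int_{|z|\ge r}(\phi(x+z,y+z)-\phi(x,y))(\psi(x+z,y+z)-\psi(x,y))\,d\mu(z)$, $\mathcal B^{\ge r}_{x,x+y}[\phi,\psi](x,y)=\frac12\int_{|z|\ge r}(\phi(x+z,y)-\phi(x,y))(\psi(x+z,y+z)-\psi(x,y))\,d\mu(z)$, $\mathcal B^{\ge r}_{y,x+y}[\phi,\psi](x,y)=\frac12\int_{|z|\ge r}(\phi(x,y+z)-\phi(x,y))(\psi(x+z,y+z)-\psi(x,y))\,d\mu(z)$.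 Each of $\mathcal B_{x+y},\mathcal B_{x,x+y},\mathcal B_{y,x+y}$ is "well-defined in $L^1$" if the corresponding limit as $r\to0$ exists in $L^1(\mathbb{R}^d\times\mathbb{R}^d)$, and then denotes that limit. *)

theory Defs
  imports "HOL-Analysis.Analysis"
begin

text \<open>Levy measure on R^d (type 'a), not charging the origin, i.e. a measure on R^d minus 0.\<close>
definition levy_measure :: "'a::euclidean_space measure \<Rightarrow> bool" where
  "levy_measure \<mu> \<longleftrightarrow>
     sets \<mu> = sets borel \<and>
     emeasure \<mu> {0} = 0 \<and>
     distr \<mu> borel uminus = \<mu> \<and>
     (\<forall>K. compact K \<and> 0 \<notin> K \<longrightarrow> emeasure \<mu> K < \<infinity>) \<and>
     integrable \<mu> (\<lambda>z. min ((norm z)\<^sup>2) 1)"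

definition B_sum_ge :: "'a::euclidean_space measure \<Rightarrow> ('a \<times> 'a \<Rightarrow> real) \<Rightarrow> ('a \<times> 'a \<Rightarrow> real)
    \<Rightarrow> real \<Rightarrow> 'a \<times> 'a \<Rightarrow> real" where
  "B_sum_ge \<mu> \<phi> \<psi> r p = (case p of (x, y) \<Rightarrow>
     (1/2) * (\<integral>z. indicator {z. r \<le> norm z} z *
        ((\<phi> (x + z, y + z) - \<phi> (x, y)) * (\<psi> (x + z, y + z) - \<psi> (x, y))) \<partial>\<mu>))"

definition B_x_sum_ge :: "'a::euclidean_space measure \<Rightarrow> ('a \<times> 'a \<Rightarrow> real) \<Rightarrow> ('a \<times> 'a \<Rightarrow> real)
    \<Rightarrow> real \<Rightarrow> 'a \<times> 'a \<Rightarrow> real" where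
  "B_x_sum_ge \<mu> \<phi> \<psi> r p = (case p of (x, y) \<Rightarrow>
     (1/2) * (\<integral>z. indicator {z. r \<le> norm z} z *
        ((\<phi> (x + z, y) - \<phi> (x, y)) * (\<psi> (x + z, y + z) - \<psi> (x, y))) \<partial>\<mu>))"

definition B_y_sum_ge :: "'a::euclidean_space measure \<Rightarrow> ('a \<times> 'a \<Rightarrow> real) \<Rightarrow> ('a \<times> 'a \<Rightarrow> real)
    \<Rightarrow> real \<Rightarrow> 'a \<times> 'a \<Rightarrow> real" where
  "B_y_sum_ge \<mu> \<phi> \<psi> r p = (case p of (x, y) \<Rightarrow>
     (1/2) * (\<integral>z. indicator {z. r \<le> norm z} z *
        ((\<phi> (x, y + z) - \<phi> (x, y)) * (\<psi> (x + z, y + z) - \<psi> (x, y))) \<partial>\<mu>))"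

definition L1_limit_at0 :: "(real \<Rightarrow> 'b::euclidean_space \<Rightarrow> real) \<Rightarrow> ('b \<Rightarrow> real) \<Rightarrow> bool" where
  "L1_limit_at0 F B \<longleftrightarrow>
     integrable lborel B \<and>
     (\<forall>\<^sub>F r in at_right 0. integrable lborel (F r)) \<and>
     ((\<lambda>r. \<integral>\<^sup>+ p. ennreal \<bar>F r p - B p\<bar> \<partial>lborel) \<longlongrightarrow> 0) (at_right 0)"

end

theory Submission
  imports Defs
begin

text \<open>Write the increment of phi along the diagonal as
  (phi(p + (z,z)) - phi(p + (0,z))) + (phi(p + (0,z)) - phi(p)); the second part yields B_{y,x+y}.
  Once the jumps are truncated to |z| >= r the Levy measure is finite and Fubini applies, so in the
  first part one may translate p by -(z,z) and then reflect z to -z (the measure is symmetric):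
  this turns it into the integrand of B_{x,x+y}. The identity thus holds for every truncation
  r > 0, and the L^1 limits as r tends to 0 preserve it.\<close>

lemma borel_measurable_continuous_compose:
  fixes \<phi> :: "'b::topological_space \<Rightarrow> real" and g :: "'c::topological_space \<Rightarrow> 'b"
  assumes "\<phi> \<in> borel_measurable borel" and "continuous_on UNIV g"
  shows "(\<lambda>x. \<phi> (g x)) \<in> borel_measurable borel"
  using measurable_compose[OF borel_measurable_continuous_onI[OF assms(2)] assms(1)] by simp

lemma measurable_pair_lborel_eq_borel:
  fixes \<nu> :: "'a::euclidean_space measure"
  assumes "sets \<nu> = sets borel"
  shows "measurable (\<nu> \<Otimes>\<^sub>M (lborel :: 'b::euclidean_space measure)) M = measurable borel M"
proof -
  have "sets (\<nu> \<Otimes>\<^sub>M (lborel :: 'b measure)) = sets (borel \<Otimes>\<^sub>M (borel :: 'b measure))"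
    by (rule sets_pair_measure_cong) (simp_all add: assms)
  then show ?thesis by (intro measurable_cong_sets) (metis borel_prod, rule refl)
qed

lemma nn_integral_lborel_translate:
  fixes f :: "'a::euclidean_space \<Rightarrow> ennreal"
  assumes "f \<in> borel_measurable borel"
  shows "(\<integral>\<^sup>+p. f (p + c) \<partial>lborel) = (\<integral>\<^sup>+p. f p \<partial>lborel)"
  using nn_integral_distr[of "(+) c" lborel borel f] assms by (simp add: lborel_distr_plus add.commute)

lemma integral_lborel_translate:
  fixes f :: "'a::euclidean_space \<Rightarrow> real"
  assumes "f \<in> borel_measurable borel"
  shows "(\<integral>p. f (p + c) \<partial>lborel) = (\<integral>p. f p \<partial>lborel)"
  using integral_distr[of "(+) c" lborel borel f] assms by (simp add: lborel_distr_plus add.commute)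

lemma integrable_bounded_compact_support:
  fixes f :: "'a::euclidean_space \<Rightarrow> real"
  assumes "f \<in> borel_measurable borel" and "bounded (range f)"
    and "compact K" and "\<forall>p. p \<notin> K \<longrightarrow> f p = 0"
  shows "integrable lborel f"
proof -
  obtain M where M: "\<forall>p. \<bar>f p\<bar> \<le> M" using assms(2) by (auto simp: bounded_iff)
  have "K \<in> sets lborel" using assms(3) by (simp add: compact_imp_closed borel_closed)
  moreover have "emeasure lborel K < \<infinity>"
    by (rule emeasure_bounded_finite[OF compact_imp_bounded[OF assms(3)]])
  ultimately have "integrable lborel (\<lambda>p. M * indicator K p)" by simp
  then show ?thesis
    by (rule Bochner_Integration.integrable_bound)
       (use assms M in \<open>auto simp: indicator_def intro!: AE_I2 order_trans[OF _ abs_ge_self]\<close>)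
qed

lemma integrable_pair_translate:
  fixes \<nu> :: "'a::euclidean_space measure" and f :: "'b::euclidean_space \<Rightarrow> real"
  assumes "finite_measure \<nu>" and "sets \<nu> = sets borel" and "continuous_on UNIV s"
    and "f \<in> borel_measurable borel" and "integrable lborel f"
  shows "integrable (\<nu> \<Otimes>\<^sub>M lborel) (\<lambda>(z, p). f (p + s z))"
proof -
  interpret finite_measure \<nu> by fact
  have meas: "(\<lambda>(z, p). f (p + s z)) \<in> borel_measurable (\<nu> \<Otimes>\<^sub>M lborel)"
    unfolding measurable_pair_lborel_eq_borel[OF assms(2)] case_prod_beta'
    by (intro borel_measurable_continuous_compose[OF assms(4)] continuous_intros
          continuous_on_compose2[OF assms(3)]) auto
  have "(\<integral>\<^sup>+x. norm (case x of (z, p) \<Rightarrow> f (p + s z)) \<partial>(\<nu> \<Otimes>\<^sub>M lborel))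
      = (\<integral>\<^sup>+z. (\<integral>\<^sup>+p. norm (f (p + s z)) \<partial>lborel) \<partial>\<nu>)"
    using meas by (subst lborel.nn_integral_fst[symmetric]) (auto simp: case_prod_beta')
  also have "\<dots> = (\<integral>\<^sup>+z. (\<integral>\<^sup>+p. norm (f p) \<partial>lborel) \<partial>\<nu>)"
    using nn_integral_lborel_translate[of "\<lambda>q. ennreal (norm (f q))"] assms(4) by simp
  also have "\<dots> = emeasure \<nu> (space \<nu>) * (\<integral>\<^sup>+p. norm (f p) \<partial>lborel)"
    by (simp add: mult.commute)
  also have "\<dots> < \<infinity>"
  proof -
    have "emeasure \<nu> (space \<nu>) < \<infinity>" by (simp add: less_top[symmetric])
    then show ?thesis using assms(5) by (simp add: integrable_iff_bounded ennreal_mult_less_top)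
  qed
  finally show ?thesis
    using meas by (simp add: integrable_iff_bounded)
qed

lemma integrable_pair_increments_product:
  fixes \<nu> :: "'a::euclidean_space measure" and \<phi> \<psi> :: "'b::euclidean_space \<Rightarrow> real"
  assumes "finite_measure \<nu>" and "sets \<nu> = sets borel"
    and "continuous_on UNIV u" and "continuous_on UNIV v"
    and \<phi>m: "\<phi> \<in> borel_measurable borel" and \<phi>b: "\<And>p. \<bar>\<phi> p\<bar> \<le> M"
    and \<psi>m: "\<psi> \<in> borel_measurable borel" and \<psi>i: "integrable lborel \<psi>"
  shows "integrable (\<nu> \<Otimes>\<^sub>M lborel) (\<lambda>(z, p). (\<phi> (p + u z) - \<phi> p) * (\<psi> (p + v z) - \<psi> p))"
proof (rule Bochner_Integration.integrable_bound)
  have "integrable (\<nu> \<Otimes>\<^sub>M lborel) (\<lambda>(z, p). \<bar>\<psi> (p + v z)\<bar>)"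
    and "integrable (\<nu> \<Otimes>\<^sub>M lborel) (\<lambda>(z, p). \<bar>\<psi> (p + 0)\<bar>)"
    using \<psi>m \<psi>i by (intro integrable_pair_translate assms(1-4) continuous_intros; simp)+
  then show "integrable (\<nu> \<Otimes>\<^sub>M lborel) (\<lambda>(z, p). 2 * M * (\<bar>\<psi> (p + v z)\<bar> + \<bar>\<psi> p\<bar>))"
    by (simp add: case_prod_beta')
  show "(\<lambda>(z, p). (\<phi> (p + u z) - \<phi> p) * (\<psi> (p + v z) - \<psi> p)) \<in> borel_measurable (\<nu> \<Otimes>\<^sub>M lborel)"
    unfolding measurable_pair_lborel_eq_borel[OF assms(2)] case_prod_beta'
    by (intro borel_measurable_times borel_measurable_diff borel_measurable_continuous_compose[OF \<phi>m]
          borel_measurable_continuous_compose[OF \<psi>m] continuous_intros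
          continuous_on_compose2[OF assms(3)] continuous_on_compose2[OF assms(4)]) auto
  have bound: "\<bar>(\<phi> (p + u z) - \<phi> p) * (\<psi> (p + v z) - \<psi> p)\<bar>
      \<le> \<bar>2 * M * (\<bar>\<psi> (p + v z)\<bar> + \<bar>\<psi> p\<bar>)\<bar>" for z p
  proof -
    have "\<bar>\<phi> (p + u z) - \<phi> p\<bar> \<le> 2 * M"
      using abs_triangle_ineq4[of "\<phi> (p + u z)" "\<phi> p"] \<phi>b[of "p + u z"] \<phi>b[of p] by linarith
    moreover have "\<bar>\<psi> (p + v z) - \<psi> p\<bar> \<le> \<bar>\<psi> (p + v z)\<bar> + \<bar>\<psi> p\<bar>"
      by (rule abs_triangle_ineq4)
    moreover have "0 \<le> M"
      using \<phi>b[of p] abs_ge_zero[of "\<phi> p"] by linarith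
    ultimately have "\<bar>(\<phi> (p + u z) - \<phi> p) * (\<psi> (p + v z) - \<psi> p)\<bar> \<le> 2 * M * (\<bar>\<psi> (p + v z)\<bar> + \<bar>\<psi> p\<bar>)"
      unfolding abs_mult by (intro mult_mono) simp_all
    then show ?thesis
      by (rule order_trans[OF _ abs_ge_self])
  qed
  show "AE x in \<nu> \<Otimes>\<^sub>M lborel.
      norm (case x of (z, p) \<Rightarrow> (\<phi> (p + u z) - \<phi> p) * (\<psi> (p + v z) - \<psi> p))
      \<le> norm (case x of (z, p) \<Rightarrow> 2 * M * (\<bar>\<psi> (p + v z)\<bar> + \<bar>\<psi> p\<bar>))"
    by (intro AE_I2) (simp add: split_beta bound)
qed

lemma integral_pair_translate_reflect:
  fixes \<nu> :: "'a::euclidean_space measure" and H :: "'b::euclidean_space \<times> 'a \<Rightarrow> real"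
  assumes "sigma_finite_measure \<nu>" and sets: "sets \<nu> = sets borel"
    and sym: "distr \<nu> borel uminus = \<nu>"
    and Hm: "H \<in> borel_measurable borel"
    and int_translate: "integrable (\<nu> \<Otimes>\<^sub>M lborel) (\<lambda>(z, p). H (p + s z, z))"
    and int_reflect: "integrable (\<nu> \<Otimes>\<^sub>M lborel) (\<lambda>(z, p). H (p, - z))"
  shows "(\<integral>x. (case x of (z, p) \<Rightarrow> H (p + s z, z)) \<partial>(\<nu> \<Otimes>\<^sub>M lborel))
       = (\<integral>x. (case x of (z, p) \<Rightarrow> H (p, - z)) \<partial>(\<nu> \<Otimes>\<^sub>M lborel))"
proof -
  interpret sigma_finite_measure \<nu> by fact
  interpret pair_sigma_finite \<nu> lborel ..
  define h where "h z = (\<integral>p. H (p, z) \<partial>lborel)" for z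
  have hm: "h \<in> borel_measurable borel"
    unfolding h_def
  proof (rule lborel.borel_measurable_lebesgue_integral)
    show "(\<lambda>(z, p). H (p, z)) \<in> borel_measurable (borel \<Otimes>\<^sub>M lborel)"
      unfolding measurable_pair_lborel_eq_borel[OF refl] case_prod_beta'
      by (intro borel_measurable_continuous_compose[OF Hm] continuous_intros)
  qed
  have translate: "(\<integral>p. H (p + s z, z) \<partial>lborel) = h z" for z
    unfolding h_def
    by (rule integral_lborel_translate[of "\<lambda>p. H (p, z)"])
       (intro borel_measurable_continuous_compose[OF Hm] continuous_intros)
  have "(\<integral>z. h z \<partial>\<nu>) = (\<integral>z. h z \<partial>distr \<nu> borel uminus)"
    by (simp add: sym)
  also have "\<dots> = (\<integral>z. h (- z) \<partial>\<nu>)"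
    using hm sets by (intro integral_distr) (auto simp: measurable_cong_sets[OF sets refl])
  finally have reflect: "(\<integral>z. h z \<partial>\<nu>) = (\<integral>z. h (- z) \<partial>\<nu>)" .
  have "(\<integral>x. (case x of (z, p) \<Rightarrow> H (p + s z, z)) \<partial>(\<nu> \<Otimes>\<^sub>M lborel))
      = (\<integral>z. (\<integral>p. H (p + s z, z) \<partial>lborel) \<partial>\<nu>)"
    using integral_fst[OF int_translate] by simp
  also have "\<dots> = (\<integral>z. h (- z) \<partial>\<nu>)"
    by (simp add: translate reflect)
  also have "\<dots> = (\<integral>x. (case x of (z, p) \<Rightarrow> H (p, - z)) \<partial>(\<nu> \<Otimes>\<^sub>M lborel))"
    using integral_fst[OF int_reflect] by (simp add: h_def)
  finally show ?thesis .
qed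

lemma emeasure_levy_measure_norm_ge_finite:
  fixes \<mu> :: "'a::euclidean_space measure"
  assumes "levy_measure \<mu>" and "0 < r"
  shows "emeasure \<mu> {z. r \<le> norm z} < \<infinity>"
proof -
  have sets: "sets \<mu> = sets borel" and int: "integrable \<mu> (\<lambda>z. min ((norm z)\<^sup>2) 1)"
    using assms(1) unfolding levy_measure_def by auto
  define m where "m = min (r\<^sup>2) 1"
  have "0 < m" unfolding m_def using assms(2) by simp
  have S: "{z::'a. r \<le> norm z} \<in> sets \<mu>" unfolding sets by measurable
  have bound: "indicator {z. r \<le> norm z} z \<le> min ((norm z)\<^sup>2) 1 / m" for z :: 'a
  proof (cases "r \<le> norm z")
    case True
    then have "r\<^sup>2 \<le> (norm z)\<^sup>2" using assms(2) by (intro power_mono) auto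
    then show ?thesis using True \<open>0 < m\<close> by (simp add: m_def field_simps)
  qed (use \<open>0 < m\<close> in simp)
  have "integrable \<mu> (indicator {z::'a. r \<le> norm z} :: 'a \<Rightarrow> real)"
  proof (rule Bochner_Integration.integrable_bound)
    show "integrable \<mu> (\<lambda>z. min ((norm z)\<^sup>2) 1 / m)"
      using int by simp
    show "(indicator {z::'a. r \<le> norm z} :: 'a \<Rightarrow> real) \<in> borel_measurable \<mu>"
      using S by simp
    show "AE z in \<mu>. norm (indicator {z::'a. r \<le> norm z} z :: real) \<le> norm (min ((norm z)\<^sup>2) 1 / m)"
      using bound \<open>0 < m\<close> by (intro AE_I2) (auto simp: indicator_def)
  qed
  then show ?thesis using sets by (simp add: integrable_indicator_iff sets_eq_imp_space_eq)
qed

definition levy_truncation :: "'a::euclidean_space measure \<Rightarrow> real \<Rightarrow> 'a measure" where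
  "levy_truncation \<mu> r = density \<mu> (\<lambda>z. ennreal (indicator {z. r \<le> norm z} z))"

lemma sets_levy_truncation: "sets (levy_truncation \<mu> r) = sets \<mu>"
  by (simp add: levy_truncation_def)

lemma integral_levy_truncation:
  fixes g :: "'a::euclidean_space \<Rightarrow> real"
  assumes "sets \<mu> = sets borel" and "g \<in> borel_measurable borel"
  shows "(\<integral>z. g z \<partial>levy_truncation \<mu> r) = (\<integral>z. indicator {z. r \<le> norm z} z * g z \<partial>\<mu>)"
  unfolding levy_truncation_def
  by (subst integral_density) (auto simp: measurable_cong_sets[OF assms(1) refl] assms(2))

lemma finite_measure_levy_truncation:
  assumes "levy_measure \<mu>" and "0 < r"
  shows "finite_measure (levy_truncation \<mu> r)"
proof (rule finite_measureI)
  have sets: "sets \<mu> = sets borel" using assms(1) by (simp add: levy_measure_def)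
  have "{z. r \<le> norm z} \<in> sets borel" by measurable
  then have "emeasure (levy_truncation \<mu> r) (space (levy_truncation \<mu> r)) = emeasure \<mu> {z. r \<le> norm z}"
    unfolding levy_truncation_def using sets
    by (simp add: emeasure_density nn_integral_indicator sets_eq_imp_space_eq ennreal_indicator)
  then show "emeasure (levy_truncation \<mu> r) (space (levy_truncation \<mu> r)) \<noteq> \<infinity>"
    using emeasure_levy_measure_norm_ge_finite[OF assms] by simp
qed

lemma levy_truncation_symmetric:
  fixes \<mu> :: "'a::euclidean_space measure"
  assumes sets: "sets \<mu> = sets borel" and sym: "distr \<mu> borel uminus = \<mu>"
  shows "distr (levy_truncation \<mu> r) borel uminus = levy_truncation \<mu> r"
proof -
  have "uminus \<in> measurable \<mu> (borel :: 'a measure)"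
    by (simp add: measurable_cong_sets[OF sets refl])
  then have "density (distr \<mu> borel uminus) (\<lambda>z. ennreal (indicator {z. r \<le> norm z} z))
      = distr (density \<mu> (\<lambda>z. ennreal (indicator {z. r \<le> norm z} (- z)))) borel uminus"
    by (intro density_distr) auto
  then show ?thesis
    unfolding levy_truncation_def sym by (simp add: indicator_def)
qed

lemma integral_levy_truncation_increments:
  fixes \<mu> :: "'a::euclidean_space measure" and \<phi> \<psi> :: "'b::euclidean_space \<Rightarrow> real"
  assumes "sets \<mu> = sets borel" and "\<phi> \<in> borel_measurable borel" and "\<psi> \<in> borel_measurable borel"
    and "continuous_on UNIV u" and "continuous_on UNIV v"
  shows "(\<integral>z. (\<phi> (p + u z) - \<phi> p) * (\<psi> (p + v z) - \<psi> p) \<partial>levy_truncation \<mu> r)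
       = (\<integral>z. indicator {z. r \<le> norm z} z * ((\<phi> (p + u z) - \<phi> p) * (\<psi> (p + v z) - \<psi> p)) \<partial>\<mu>)"
  by (intro integral_levy_truncation assms(1) borel_measurable_times borel_measurable_diff
        borel_measurable_continuous_compose[OF assms(2)] borel_measurable_continuous_compose[OF assms(3)]
        continuous_intros continuous_on_compose2[OF assms(4)] continuous_on_compose2[OF assms(5)]) auto

lemma
  fixes \<mu> :: "'a::euclidean_space measure" and \<phi> \<psi> :: "'a \<times> 'a \<Rightarrow> real"
  assumes "sets \<mu> = sets borel" and "\<phi> \<in> borel_measurable borel" and "\<psi> \<in> borel_measurable borel"
  shows B_sum_ge_eq_integral_levy_truncation:
      "B_sum_ge \<mu> \<phi> \<psi> r p
        = (\<integral>z. (\<phi> (p + (z, z)) - \<phi> p) * (\<psi> (p + (z, z)) - \<psi> p) \<partial>levy_truncation \<mu> r) / 2"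
    and B_x_sum_ge_eq_integral_levy_truncation:
      "B_x_sum_ge \<mu> \<phi> \<psi> r p
        = (\<integral>z. (\<phi> (p + (z, 0)) - \<phi> p) * (\<psi> (p + (z, z)) - \<psi> p) \<partial>levy_truncation \<mu> r) / 2"
    and B_y_sum_ge_eq_integral_levy_truncation:
      "B_y_sum_ge \<mu> \<phi> \<psi> r p
        = (\<integral>z. (\<phi> (p + (0, z)) - \<phi> p) * (\<psi> (p + (z, z)) - \<psi> p) \<partial>levy_truncation \<mu> r) / 2"
proof -
  have diag: "continuous_on UNIV (\<lambda>z::'a. (z, z))"
    and left: "continuous_on UNIV (\<lambda>z::'a. (z, 0::'a))"
    and right: "continuous_on UNIV (\<lambda>z::'a. (0::'a, z))"
    by (intro continuous_intros)+
  show "B_sum_ge \<mu> \<phi> \<psi> r p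
        = (\<integral>z. (\<phi> (p + (z, z)) - \<phi> p) * (\<psi> (p + (z, z)) - \<psi> p) \<partial>levy_truncation \<mu> r) / 2"
    unfolding integral_levy_truncation_increments[OF assms diag diag] by (cases p) (simp add: B_sum_ge_def)
  show "B_x_sum_ge \<mu> \<phi> \<psi> r p
        = (\<integral>z. (\<phi> (p + (z, 0)) - \<phi> p) * (\<psi> (p + (z, z)) - \<psi> p) \<partial>levy_truncation \<mu> r) / 2"
    unfolding integral_levy_truncation_increments[OF assms left diag] by (cases p) (simp add: B_x_sum_ge_def)
  show "B_y_sum_ge \<mu> \<phi> \<psi> r p
        = (\<integral>z. (\<phi> (p + (0, z)) - \<phi> p) * (\<psi> (p + (z, z)) - \<psi> p) \<partial>levy_truncation \<mu> r) / 2"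
    unfolding integral_levy_truncation_increments[OF assms right diag] by (cases p) (simp add: B_y_sum_ge_def)
qed

lemma integral_pair_increments_split:
  fixes \<nu> :: "'a::euclidean_space measure" and \<phi> \<psi> :: "'a \<times> 'a \<Rightarrow> real"
  assumes fin: "finite_measure \<nu>" and sets: "sets \<nu> = sets borel"
    and sym: "distr \<nu> borel uminus = \<nu>"
    and \<phi>m: "\<phi> \<in> borel_measurable borel" and \<phi>b: "\<And>p. \<bar>\<phi> p\<bar> \<le> M"
    and \<psi>m: "\<psi> \<in> borel_measurable borel" and \<psi>i: "integrable lborel \<psi>"
  shows "(\<integral>x. (case x of (z, p) \<Rightarrow> (\<phi> (p + (z, z)) - \<phi> p) * (\<psi> (p + (z, z)) - \<psi> p)) \<partial>(\<nu> \<Otimes>\<^sub>M lborel))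
       = (\<integral>x. (case x of (z, p) \<Rightarrow> (\<phi> (p + (z, 0)) - \<phi> p) * (\<psi> (p + (z, z)) - \<psi> p)) \<partial>(\<nu> \<Otimes>\<^sub>M lborel))
       + (\<integral>x. (case x of (z, p) \<Rightarrow> (\<phi> (p + (0, z)) - \<phi> p) * (\<psi> (p + (z, z)) - \<psi> p)) \<partial>(\<nu> \<Otimes>\<^sub>M lborel))"
proof -
  have int: "integrable (\<nu> \<Otimes>\<^sub>M lborel) (\<lambda>(z, p). (\<phi> (p + u z) - \<phi> p) * (\<psi> (p + (z, z)) - \<psi> p))"
    if "continuous_on UNIV u" for u :: "'a \<Rightarrow> 'a \<times> 'a"
    by (rule integrable_pair_increments_product[OF fin sets that _ \<phi>m \<phi>b \<psi>m \<psi>i]) (intro continuous_intros)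
  define D X Y :: "'a \<times> ('a \<times> 'a) \<Rightarrow> real" where
    "D = (\<lambda>(z, p). (\<phi> (p + (z, z)) - \<phi> p) * (\<psi> (p + (z, z)) - \<psi> p))" and
    "X = (\<lambda>(z, p). (\<phi> (p + (z, 0)) - \<phi> p) * (\<psi> (p + (z, z)) - \<psi> p))" and
    "Y = (\<lambda>(z, p). (\<phi> (p + (0, z)) - \<phi> p) * (\<psi> (p + (z, z)) - \<psi> p))"
  have D_int: "integrable (\<nu> \<Otimes>\<^sub>M lborel) D" and X_int: "integrable (\<nu> \<Otimes>\<^sub>M lborel) X"
    and Y_int: "integrable (\<nu> \<Otimes>\<^sub>M lborel) Y"
    unfolding D_def X_def Y_def by (intro int continuous_intros)+
  define H :: "('a \<times> 'a) \<times> 'a \<Rightarrow> real" where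
    "H = (\<lambda>(q, z). (\<phi> q - \<phi> (q - (z, 0))) * (\<psi> q - \<psi> (q - (z, z))))"
  have H_translate: "(\<lambda>(z, p). H (p + (z, z), z)) = (\<lambda>x. D x - Y x)"
    by (auto simp: fun_eq_iff H_def D_def Y_def algebra_simps)
  have H_reflect: "(\<lambda>(z, p). H (p, - z)) = X"
    by (auto simp: fun_eq_iff H_def X_def algebra_simps)
  have H_meas: "H \<in> borel_measurable borel"
    unfolding H_def case_prod_beta'
    by (intro borel_measurable_times borel_measurable_diff borel_measurable_continuous_compose[OF \<phi>m]
          borel_measurable_continuous_compose[OF \<psi>m] continuous_intros)
  interpret finite_measure \<nu> by (rule fin)
  have "sigma_finite_measure \<nu>" ..
  then have "integral\<^sup>L (\<nu> \<Otimes>\<^sub>M lborel) (\<lambda>x. D x - Y x) = integral\<^sup>L (\<nu> \<Otimes>\<^sub>M lborel) X"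
    using integral_pair_translate_reflect[OF _ sets sym H_meas, of "\<lambda>z. (z, z)"] D_int X_int Y_int
    unfolding H_translate H_reflect by simp
  then have "integral\<^sup>L (\<nu> \<Otimes>\<^sub>M lborel) D = integral\<^sup>L (\<nu> \<Otimes>\<^sub>M lborel) X + integral\<^sup>L (\<nu> \<Otimes>\<^sub>M lborel) Y"
    using D_int Y_int by simp
  then show ?thesis
    unfolding D_def X_def Y_def .
qed

lemma integral_B_sum_ge_split:
  fixes \<mu> :: "'a::euclidean_space measure" and \<phi> \<psi> :: "'a \<times> 'a \<Rightarrow> real"
  assumes levy: "levy_measure \<mu>" and "0 < r"
    and \<phi>m: "\<phi> \<in> borel_measurable borel" and \<phi>b: "\<And>p. \<bar>\<phi> p\<bar> \<le> M"
    and \<psi>m: "\<psi> \<in> borel_measurable borel" and \<psi>i: "integrable lborel \<psi>"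
  shows "(\<integral>p. B_sum_ge \<mu> \<phi> \<psi> r p \<partial>lborel)
       = (\<integral>p. B_x_sum_ge \<mu> \<phi> \<psi> r p \<partial>lborel) + (\<integral>p. B_y_sum_ge \<mu> \<phi> \<psi> r p \<partial>lborel)"
proof -
  have sets: "sets \<mu> = sets borel" and sym: "distr \<mu> borel uminus = \<mu>"
    using levy by (auto simp: levy_measure_def)
  define \<nu> where "\<nu> = levy_truncation \<mu> r"
  have \<nu>_sets: "sets \<nu> = sets borel"
    unfolding \<nu>_def by (simp add: sets_levy_truncation sets)
  have \<nu>_fin: "finite_measure \<nu>"
    unfolding \<nu>_def using levy \<open>0 < r\<close> by (rule finite_measure_levy_truncation)
  have \<nu>_sym: "distr \<nu> borel uminus = \<nu>"
    unfolding \<nu>_def by (rule levy_truncation_symmetric[OF sets sym])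
  interpret finite_measure \<nu> by (rule \<nu>_fin)
  interpret pair_sigma_finite \<nu> lborel ..
  have iterated: "(\<integral>p. (\<integral>z. (\<phi> (p + u z) - \<phi> p) * (\<psi> (p + (z, z)) - \<psi> p) \<partial>\<nu>) / 2 \<partial>lborel)
      = (\<integral>x. (case x of (z, p) \<Rightarrow> (\<phi> (p + u z) - \<phi> p) * (\<psi> (p + (z, z)) - \<psi> p)) \<partial>(\<nu> \<Otimes>\<^sub>M lborel)) / 2"
    if "continuous_on UNIV u" for u :: "'a \<Rightarrow> 'a \<times> 'a"
    using integral_snd[OF integrable_pair_increments_product[OF \<nu>_fin \<nu>_sets that _ \<phi>m \<phi>b \<psi>m \<psi>i]]
    by (simp add: continuous_intros)
  have diag: "continuous_on UNIV (\<lambda>z::'a. (z, z))"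
    and left: "continuous_on UNIV (\<lambda>z::'a. (z, 0::'a))"
    and right: "continuous_on UNIV (\<lambda>z::'a. (0::'a, z))"
    by (intro continuous_intros)+
  show ?thesis
    unfolding B_sum_ge_eq_integral_levy_truncation[OF sets \<phi>m \<psi>m]
      B_x_sum_ge_eq_integral_levy_truncation[OF sets \<phi>m \<psi>m]
      B_y_sum_ge_eq_integral_levy_truncation[OF sets \<phi>m \<psi>m] \<nu>_def[symmetric]
      iterated[OF diag] iterated[OF left] iterated[OF right]
      integral_pair_increments_split[OF \<nu>_fin \<nu>_sets \<nu>_sym \<phi>m \<phi>b \<psi>m \<psi>i]
    by simp
qed

lemma L1_limit_at0_tendsto_integral:
  assumes "L1_limit_at0 F B"
  shows "((\<lambda>r. \<integral>p. F r p \<partial>lborel) \<longlongrightarrow> (\<integral>p. B p \<partial>lborel)) (at_right 0)"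
proof -
  have B: "integrable lborel B" and F: "\<forall>\<^sub>F r in at_right 0. integrable lborel (F r)"
    and lim: "((\<lambda>r. \<integral>\<^sup>+ p. ennreal \<bar>F r p - B p\<bar> \<partial>lborel) \<longlongrightarrow> 0) (at_right 0)"
    using assms unfolding L1_limit_at0_def by auto
  have le: "\<forall>\<^sub>F r in at_right 0. ennreal \<bar>(\<integral>p. F r p \<partial>lborel) - (\<integral>p. B p \<partial>lborel)\<bar>
      \<le> (\<integral>\<^sup>+ p. ennreal \<bar>F r p - B p\<bar> \<partial>lborel)"
    using F
  proof eventually_elim
    case (elim r)
    then show ?case
      using integral_norm_bound_ennreal[of lborel "\<lambda>p. F r p - B p"] B by simp
  qed
  have "((\<lambda>r. ennreal \<bar>(\<integral>p. F r p \<partial>lborel) - (\<integral>p. B p \<partial>lborel)\<bar>) \<longlongrightarrow> 0) (at_right 0)"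
    by (rule tendsto_sandwich[OF _ le tendsto_const lim]) simp
  then have "((\<lambda>r. \<bar>(\<integral>p. F r p \<partial>lborel) - (\<integral>p. B p \<partial>lborel)\<bar>) \<longlongrightarrow> 0) (at_right 0)"
    using tendsto_ennreal_iff[of "\<lambda>r. \<bar>(\<integral>p. F r p \<partial>lborel) - (\<integral>p. B p \<partial>lborel)\<bar>" "at_right 0" 0]
    by simp
  then show ?thesis
    by (simp add: tendsto_rabs_zero_iff LIM_zero_iff)
qed

theorem mainTheorem20:
  fixes \<mu> :: "'a::euclidean_space measure"
    and \<phi> \<psi> :: "'a \<times> 'a \<Rightarrow> real"
    and B1 B2 B3 :: "'a \<times> 'a \<Rightarrow> real"
  assumes "levy_measure \<mu>"
    and "\<phi> \<in> borel_measurable borel" and "bounded (range \<phi>)"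
    and "\<psi> \<in> borel_measurable borel" and "bounded (range \<psi>)"
    and "\<exists>K. compact K \<and> (\<forall>p. p \<notin> K \<longrightarrow> \<psi> p = 0)"
    and "L1_limit_at0 (B_sum_ge \<mu> \<phi> \<psi>) B1"
    and "L1_limit_at0 (B_x_sum_ge \<mu> \<phi> \<psi>) B2"
    and "L1_limit_at0 (B_y_sum_ge \<mu> \<phi> \<psi>) B3"
  shows "(\<integral>p. B1 p \<partial>lborel) = (\<integral>p. B2 p + B3 p \<partial>lborel)"
proof -
  obtain M where \<phi>_bound: "\<And>p. \<bar>\<phi> p\<bar> \<le> M"
    using assms(3) by (auto simp: bounded_iff)
  obtain K where "compact K" and "\<forall>p. p \<notin> K \<longrightarrow> \<psi> p = 0"
    using assms(6) by blast
  then have \<psi>_int: "integrable lborel \<psi>"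
    using assms(4,5) by (intro integrable_bounded_compact_support)
  have "\<forall>\<^sub>F r in at_right 0.
      (\<integral>p. B_x_sum_ge \<mu> \<phi> \<psi> r p \<partial>lborel) + (\<integral>p. B_y_sum_ge \<mu> \<phi> \<psi> r p \<partial>lborel)
      = (\<integral>p. B_sum_ge \<mu> \<phi> \<psi> r p \<partial>lborel)"
    by (rule eventually_mono[OF eventually_at_right_less])
       (rule integral_B_sum_ge_split[OF assms(1) _ assms(2) \<phi>_bound assms(4) \<psi>_int, symmetric])
  then have "((\<lambda>r. \<integral>p. B_sum_ge \<mu> \<phi> \<psi> r p \<partial>lborel)
      \<longlongrightarrow> (\<integral>p. B2 p \<partial>lborel) + (\<integral>p. B3 p \<partial>lborel)) (at_right 0)"
    using tendsto_add[OF L1_limit_at0_tendsto_integral[OF assms(8)]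
        L1_limit_at0_tendsto_integral[OF assms(9)]]
    by (rule Lim_transform_eventually[rotated])
  with L1_limit_at0_tendsto_integral[OF assms(7)]
  have "(\<integral>p. B1 p \<partial>lborel) = (\<integral>p. B2 p \<partial>lborel) + (\<integral>p. B3 p \<partial>lborel)"
    by (rule tendsto_unique[OF trivial_limit_at_right_real])
  moreover have "integrable lborel B2" and "integrable lborel B3"
    using assms(8,9) unfolding L1_limit_at0_def by auto
  ultimately show ?thesis by simp
qed

end
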